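(* Let $V$ be an irreducible Whittaker module of type $\eta$ over $R$ with cyclic Whittaker vector $w$. Then $\{H^iw : i\ge 0\}$ is a $\mathbb{C}$-basis of $V$.
   Context: Let $f\in\mathbb{C}[H]$ be a polynomial. $R=R(f)$ is the associative $\mathbb{C}$-algebra generated by $E,F,H$ with relations $EF-FE=f(H)$, $HE-EH=E$, $HF-FH=-F$. Let $R(E)=\mathbb{C}[E]$. Fix an algebra homomorphism $\eta:R(E)\to\mathbb{C}$ with $\eta(E)\neq0$. A vector $v$ of an $R$-module $V$ is a Whittaker vector of type $\eta$ if $Ev=\eta(E)v$; $V$ is a Whittaker module of type $\eta$ with cyclic Whittaker vector $w$ if $w$ is a Whittaker vector and $V=Rw$. *)

theory Defs
  imports Main "HOL-Computational_Algebra.Polynomial"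
begin

text \<open>An R(f)-module structure
is given by three complex-linear operators E, F, H satisfying the defining relations
of R(f); by the universal property of the algebra presented by generators and
relations this is the same as a (unital) R(f)-module.\<close>

definition poly_op :: "(complex \<Rightarrow> 'v::ab_group_add \<Rightarrow> 'v) \<Rightarrow> complex poly \<Rightarrow> ('v \<Rightarrow> 'v) \<Rightarrow> 'v \<Rightarrow> 'v"
  where "poly_op scale p A v = (\<Sum>i\<le>degree p. scale (coeff p i) ((A ^^ i) v))"

definition R_module ::
  "(complex \<Rightarrow> 'v::ab_group_add \<Rightarrow> 'v) \<Rightarrow> complex poly \<Rightarrow> ('v \<Rightarrow> 'v) \<Rightarrow> ('v \<Rightarrow> 'v) \<Rightarrow> ('v \<Rightarrow> 'v) \<Rightarrow> bool"
  where "R_module scale f E F H \<longleftrightarrow>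
     vector_space scale \<and>
     Vector_Spaces.linear scale scale E \<and> Vector_Spaces.linear scale scale F \<and>
     Vector_Spaces.linear scale scale H \<and>
     (\<forall>v. E (F v) - F (E v) = poly_op scale f H v) \<and>
     (\<forall>v. H (E v) - E (H v) = E v) \<and>
     (\<forall>v. H (F v) - F (H v) = - F v)"

definition R_submodule ::
  "(complex \<Rightarrow> 'v::ab_group_add \<Rightarrow> 'v) \<Rightarrow> ('v \<Rightarrow> 'v) \<Rightarrow> ('v \<Rightarrow> 'v) \<Rightarrow> ('v \<Rightarrow> 'v) \<Rightarrow> 'v set \<Rightarrow> bool"
  where "R_submodule scale E F H W \<longleftrightarrow>
     module.subspace scale W \<and> (\<forall>x\<in>W. E x \<in> W \<and> F x \<in> W \<and> H x \<in> W)"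

definition R_irreducible ::
  "(complex \<Rightarrow> 'v::ab_group_add \<Rightarrow> 'v) \<Rightarrow> ('v \<Rightarrow> 'v) \<Rightarrow> ('v \<Rightarrow> 'v) \<Rightarrow> ('v \<Rightarrow> 'v) \<Rightarrow> bool"
  where "R_irreducible scale E F H \<longleftrightarrow>
     (UNIV :: 'v set) \<noteq> {0} \<and>
     (\<forall>W. R_submodule scale E F H W \<longrightarrow> W = {0} \<or> W = UNIV)"

inductive_set word_orbit ::
  "('v \<Rightarrow> 'v) \<Rightarrow> ('v \<Rightarrow> 'v) \<Rightarrow> ('v \<Rightarrow> 'v) \<Rightarrow> 'v \<Rightarrow> 'v set"
  for E F H w where
  base: "w \<in> word_orbit E F H w"
| stepE: "x \<in> word_orbit E F H w \<Longrightarrow> E x \<in> word_orbit E F H w"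
| stepF: "x \<in> word_orbit E F H w \<Longrightarrow> F x \<in> word_orbit E F H w"
| stepH: "x \<in> word_orbit E F H w \<Longrightarrow> H x \<in> word_orbit E F H w"

definition cyclic_submodule ::
  "(complex \<Rightarrow> 'v::ab_group_add \<Rightarrow> 'v) \<Rightarrow> ('v \<Rightarrow> 'v) \<Rightarrow> ('v \<Rightarrow> 'v) \<Rightarrow> ('v \<Rightarrow> 'v) \<Rightarrow> 'v \<Rightarrow> 'v set"
  where "cyclic_submodule scale E F H w = module.span scale (word_orbit E F H w)"

text \<open>Whittaker vector of type eta, where eta(E) = c.\<close>
definition whittaker_vector ::
  "(complex \<Rightarrow> 'v::ab_group_add \<Rightarrow> 'v) \<Rightarrow> ('v \<Rightarrow> 'v) \<Rightarrow> complex \<Rightarrow> 'v \<Rightarrow> bool"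
  where "whittaker_vector scale E c v \<longleftrightarrow> E v = scale c v"

definition whittaker_module ::
  "(complex \<Rightarrow> 'v::ab_group_add \<Rightarrow> 'v) \<Rightarrow> ('v \<Rightarrow> 'v) \<Rightarrow> ('v \<Rightarrow> 'v) \<Rightarrow> ('v \<Rightarrow> 'v) \<Rightarrow> complex \<Rightarrow> 'v \<Rightarrow> bool"
  where "whittaker_module scale E F H c w \<longleftrightarrow>
     whittaker_vector scale E c w \<and> cyclic_submodule scale E F H w = (UNIV :: 'v set)"

end

theory Submission
  imports
    Defs
    "HOL-Computational_Algebra.Fundamental_Theorem_Algebra"
    "HOL-Analysis.Continuum_Not_Denumerable"
begin

text \<open>
  The element \<open>\<Omega> = F E + u(H)\<close>, where \<open>u(x) - u(x - 1) = f(x)\<close>, is central in \<open>R(f)\<close>.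
  An irreducible Whittaker module \<open>V = R w\<close> has countable dimension, and on a nonzero complex
  space of countable dimension no endomorphism has all of its resolvents \<open>\<Omega> - z\<close> invertible:
  the vectors \<open>(\<Omega> - z)\<^sup>-\<^sup>1 w\<close> would form an uncountable independent family. Since kernel and
  image of \<open>\<Omega> - z\<close> are submodules, Schur's lemma makes \<open>\<Omega>\<close> act by a scalar \<open>z\<close>.
  Then \<open>c F w = F E w = z w - u(H) w\<close>, and the commutation rules \<open>E H = (H - 1) E\<close>,
  \<open>F H = (H + 1) F\<close> show that the span of the \<open>H\<^sup>i w\<close> is a submodule; it contains \<open>w\<close>, so it
  is \<open>V\<close>. Finally, if \<open>p(H) w = 0\<close> with \<open>p \<noteq> 0\<close> of least degree, then
  \<open>0 = E p(H) w = c p(H - 1) w\<close>, so the lower-degree polynomial \<open>p(x) - p(x - 1)\<close> also kills \<open>w\<close>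
  and must vanish; hence \<open>p\<close> is a nonzero constant, contradicting \<open>w \<noteq> 0\<close>.
\<close>

section \<open>Backward differences of polynomials\<close>

definition backward_diff :: "'a::comm_ring_1 poly \<Rightarrow> 'a poly"
  where "backward_diff p = p - pcompose p [:-1, 1:]"

lemma backward_diff_pochhammer:
  "backward_diff (pochhammer [:0, 1::'a::field_char_0:] (Suc n))
     = smult (of_nat (Suc n)) (pochhammer [:0, 1:] n)"
proof -
  have poly_pochhammer: "poly (pochhammer [:0, 1:] k) y = pochhammer y k" for k and y :: 'a
    by (induction k) (auto simp: pochhammer_Suc)
  have "pochhammer y (Suc n) - pochhammer (y - 1) (Suc n) = of_nat (Suc n) * pochhammer y n" for y :: 'a
    using pochhammer_rec[of "y - 1" n] by (simp add: pochhammer_Suc algebra_simps)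
  then show ?thesis
    by (intro poly_eq_poly_eq_iff[THEN iffD1] ext)
      (simp add: backward_diff_def poly_pcompose poly_pochhammer)
qed

lemma degree_pochhammer_X [simp]: "degree (pochhammer [:0, 1::'a::field_char_0:] n) = n"
  and coeff_pochhammer_X_degree [simp]: "coeff (pochhammer [:0, 1::'a:] n) n = 1"
proof -
  have "pochhammer [:0, 1::'a:] n = (\<Prod>i<n. [:of_nat i, 1:])"
    by (simp add: pochhammer_prod atLeast0LessThan of_nat_poly)
  moreover have "degree (\<Prod>i<n. [:of_nat i, 1::'a:]) = n"
    by (subst degree_prod_eq_sum_degree) auto
  moreover have "lead_coeff (\<Prod>i<n. [:of_nat i, 1::'a:]) = 1"
    by (simp add: lead_coeff_prod)
  ultimately show "degree (pochhammer [:0, 1::'a:] n) = n" "coeff (pochhammer [:0, 1::'a:] n) n = 1"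
    by simp_all
qed

lemma degree_backward_diff_less:
  fixes p :: "'a::field_char_0 poly"
  assumes "degree p > 0"
  shows "degree (backward_diff p) < degree p"
proof -
  have deg: "degree (pcompose p [:-1, 1:]) = degree p"
    by (simp add: degree_pcompose)
  moreover have "lead_coeff (pcompose p [:-1, 1:]) = lead_coeff p"
    by (simp add: lead_coeff_comp)
  ultimately have "coeff (pcompose p [:-1, 1:]) (degree p) = lead_coeff p"
    by simp
  then have "degree (backward_diff p) \<le> degree p" "coeff (backward_diff p) (degree p) = 0"
    using deg unfolding backward_diff_def by (auto intro: degree_diff_le)
  with assms show ?thesis
    by (metis le_neq_implies_less leading_coeff_0_iff degree_0)
qed

lemma backward_diff_surj: "\<exists>u. backward_diff u = (f :: 'a::field_char_0 poly)"
proof (induction "degree f" arbitrary: f rule: less_induct)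
  case less
  show ?case
  proof (cases "f = 0")
    case True
    then show ?thesis by (intro exI[of _ 0]) (simp add: backward_diff_def)
  next
    case False
    define n where "n = degree f"
    define r where "r = smult (lead_coeff f) (pochhammer [:0, 1:] n)"
    have "\<exists>u. backward_diff u = f - r"
    proof (cases "f - r = 0")
      case True
      then show ?thesis by (intro exI[of _ 0]) (simp add: backward_diff_def)
    next
      case False
      have "degree (f - r) \<le> n" "coeff (f - r) n = 0"
        by (auto simp: r_def n_def intro: degree_diff_le)
      with False have "degree (f - r) < degree f"
        by (metis le_neq_implies_less leading_coeff_0_iff n_def)
      then show ?thesis using less by blast
    qed
    then obtain u where u: "backward_diff u = f - r" ..
    define v where "v = u + smult (lead_coeff f / of_nat (Suc n)) (pochhammer [:0, 1:] (Suc n))"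
    have "backward_diff v = backward_diff u
        + smult (lead_coeff f / of_nat (Suc n)) (backward_diff (pochhammer [:0, 1:] (Suc n)))"
      by (simp add: v_def backward_diff_def pcompose_add pcompose_smult smult_diff_right algebra_simps)
    also have "\<dots> = f"
      by (simp only: u backward_diff_pochhammer) (simp add: r_def del: of_nat_Suc)
    finally show ?thesis ..
  qed
qed

lemma backward_diff_eq_0_iff: "backward_diff p = 0 \<longleftrightarrow> degree (p :: 'a::field_char_0 poly) = 0"
proof
  assume "degree p = 0"
  then show "backward_diff p = 0"
    by (elim degree_eq_zeroE) (simp add: backward_diff_def)
next
  assume diff: "backward_diff p = 0"
  have shift: "poly p (y - 1) = poly p y" for y
    using arg_cong[OF diff, of "\<lambda>q. poly q y"] by (simp add: backward_diff_def poly_pcompose)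
  have "poly p (- of_nat n) = poly p 0" for n
  proof (induction n)
    case (Suc n)
    have "- of_nat (Suc n) = - of_nat n - (1::'a)"
      by simp
    with Suc show ?case
      by (metis shift)
  qed simp
  then have "range (\<lambda>n::nat. - of_nat n :: 'a) \<subseteq> {x. poly (p - [:poly p 0:]) x = 0}"
    by auto
  moreover have "infinite (range (\<lambda>n::nat. - of_nat n :: 'a))"
    by (rule range_inj_infinite) (auto simp: inj_def)
  ultimately have "p - [:poly p 0:] = 0"
    using poly_roots_finite finite_subset by blast
  then show "degree p = 0"
    by (metis degree_pCons_0 eq_iff_diff_eq_0)
qed

section \<open>Polynomials in an endomorphism\<close>

locale complex_vector_space = vector_space scale
  for scale :: "complex \<Rightarrow> 'v::ab_group_add \<Rightarrow> 'v" (infixr \<open>*s\<close> 75)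
begin

sublocale endo: vector_space_pair scale scale ..

abbreviation linear_op :: "('v \<Rightarrow> 'v) \<Rightarrow> bool"
  where "linear_op \<equiv> Vector_Spaces.linear scale scale"

lemma linearI:
  assumes "\<And>x y. g (x + y) = g x + g y" "\<And>a x. g (a *s x) = a *s g x"
  shows "linear_op g"
  unfolding Vector_Spaces.linear_iff using assms vector_space_axioms by blast

lemma poly_op_eq_sum_lessThan:
  assumes "degree p < N"
  shows "poly_op scale p A v = (\<Sum>i<N. coeff p i *s (A ^^ i) v)"
  unfolding poly_op_def
  by (rule sum.mono_neutral_left) (use assms in \<open>auto simp: coeff_eq_0\<close>)

lemma poly_op_0 [simp]: "poly_op scale 0 A v = 0"
  by (simp add: poly_op_def)

lemma poly_op_const [simp]: "poly_op scale [:a:] A v = a *s v"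
  by (simp add: poly_op_def)

lemma poly_op_pCons:
  assumes "linear_op A"
  shows "poly_op scale (pCons a p) A v = a *s v + A (poly_op scale p A v)"
proof -
  have "degree (pCons a p) < Suc (Suc (degree p))"
    using degree_pCons_le[of a p] by linarith
  then have "poly_op scale (pCons a p) A v
      = a *s v + (\<Sum>i<Suc (degree p). coeff p i *s A ((A ^^ i) v))"
    by (simp add: poly_op_eq_sum_lessThan sum.lessThan_Suc_shift del: sum.lessThan_Suc)
  also have "(\<Sum>i<Suc (degree p). coeff p i *s A ((A ^^ i) v)) = A (poly_op scale p A v)"
    by (simp add: poly_op_eq_sum_lessThan[of p "Suc (degree p)"] endo.linear_sum[OF assms]
        endo.linear_scale[OF assms] del: sum.lessThan_Suc)
  finally show ?thesis .
qed

lemma poly_op_add: "poly_op scale (p + q) A v = poly_op scale p A v + poly_op scale q A v"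
proof -
  have "degree (p + q) < Suc (max (degree p) (degree q))"
    using degree_add_le_max[of p q] by simp
  then show ?thesis
    by (simp add: poly_op_eq_sum_lessThan[of _ "Suc (max (degree p) (degree q))"]
        scale_left_distrib sum.distrib del: sum.lessThan_Suc)
qed

lemma poly_op_smult: "poly_op scale (smult a p) A v = a *s poly_op scale p A v"
proof -
  have "degree (smult a p) < Suc (degree p)"
    using degree_smult_le[of a p] by simp
  then show ?thesis
    by (simp add: poly_op_eq_sum_lessThan[of _ "Suc (degree p)"] scale_sum_right del: sum.lessThan_Suc)
qed

lemma poly_op_diff: "poly_op scale (p - q) A v = poly_op scale p A v - poly_op scale q A v"
  using poly_op_add[of "p - q" q A v] by (simp add: algebra_simps)

lemma poly_op_sum: "poly_op scale (\<Sum>i\<in>I. p i) A v = (\<Sum>i\<in>I. poly_op scale (p i) A v)"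
  by (induction I rule: infinite_finite_induct) (simp_all add: poly_op_add)

lemma poly_op_monom: "poly_op scale (monom a i) A v = a *s (A ^^ i) v"
proof -
  have "degree (monom a i) < Suc i"
    by (simp add: degree_monom_le le_imp_less_Suc)
  moreover have "coeff (monom a i) k *s (A ^^ k) v = (if k = i then a *s (A ^^ k) v else 0)" for k
    by (simp add: coeff_monom)
  ultimately show ?thesis
    by (simp add: poly_op_eq_sum_lessThan[of _ "Suc i"] del: sum.lessThan_Suc)
qed

lemma linear_poly_op:
  assumes "linear_op A"
  shows "linear_op (poly_op scale p A)"
proof (induction p)
  case 0
  show ?case by (rule linearI) simp_all
next
  case (pCons a p)
  show ?case
    by (rule linearI) (simp_all add: poly_op_pCons[OF assms] endo.linear_add[OF assms]
        endo.linear_add[OF pCons(2)] endo.linear_scale[OF assms] endo.linear_scale[OF pCons(2)]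
        scale_right_distrib algebra_simps)
qed

lemma poly_op_mult:
  assumes "linear_op A"
  shows "poly_op scale (p * q) A v = poly_op scale p A (poly_op scale q A v)"
proof (induction p)
  case (pCons a p)
  have "pCons a p * q = smult a q + pCons 0 (p * q)"
    by simp
  then show ?case
    by (simp only: poly_op_add poly_op_smult poly_op_pCons[OF assms] pCons) simp
qed simp

lemma poly_op_in_span_powers: "poly_op scale p A v \<in> span (range (\<lambda>i. (A ^^ i) v))"
  unfolding poly_op_def by (intro span_sum span_scale span_base) auto

lemma poly_op_commute:
  assumes "linear_op A" "linear_op B" "\<And>x. B (A x) = A (B x)"
  shows "B (poly_op scale p A v) = poly_op scale p A (B v)"
  by (induction p) (simp_all add: assms poly_op_pCons endo.linear_add endo.linear_scale endo.linear_0)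

lemma poly_op_intertwine:
  assumes A: "linear_op A" and B: "linear_op B" and BA: "\<And>x. B (A x) = A (B x) + s *s B x"
  shows "B (poly_op scale p A v) = poly_op scale (pcompose p [:s, 1:]) A (B v)"
proof (induction p)
  case 0
  show ?case by (simp add: endo.linear_0[OF B])
next
  case (pCons a p)
  have "B (poly_op scale (pCons a p) A v)
      = a *s B v + (A (poly_op scale (pcompose p [:s, 1:]) A (B v))
        + s *s poly_op scale (pcompose p [:s, 1:]) A (B v))"
    by (simp add: poly_op_pCons[OF A] endo.linear_add[OF B] endo.linear_scale[OF B] BA pCons)
  also have "\<dots> = poly_op scale (pcompose (pCons a p) [:s, 1:]) A (B v)"
    by (simp add: pcompose_pCons poly_op_add poly_op_mult[OF A] poly_op_pCons[OF A]
        endo.linear_0[OF A] poly_op_smult algebra_simps)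
  finally show ?case .
qed

lemma independent_range_inj:
  assumes inj: "inj g"
    and combination: "\<And>I a i. finite I \<Longrightarrow> (\<Sum>j\<in>I. a j *s g j) = 0 \<Longrightarrow> i \<in> I \<Longrightarrow> a i = 0"
  shows "independent (range g)"
  unfolding independent_explicit_finite_subsets
proof (intro allI impI ballI)
  fix S b v
  assume S: "S \<subseteq> range g" "finite S" and zero: "(\<Sum>v\<in>S. b v *s v) = 0" and "v \<in> S"
  define I where "I = g -` S"
  have "finite I"
    unfolding I_def using S(2) inj by (rule finite_vimageI)
  have S_eq: "S = g ` I"
    using S(1) unfolding I_def by auto
  then obtain i where i: "i \<in> I" "v = g i"
    using \<open>v \<in> S\<close> by blast
  have "(\<Sum>j\<in>I. b (g j) *s g j) = 0"
    using zero unfolding S_eq by (simp add: sum.reindex inj_on_subset[OF inj])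
  then have "b (g i) = 0"
    by (rule combination[OF \<open>finite I\<close> _ i(1)])
  with i(2) show "b v = 0"
    by simp
qed

lemma powers_independent:
  assumes "\<And>p. poly_op scale p A v = 0 \<Longrightarrow> p = 0"
  shows inj_powers: "inj (\<lambda>i. (A ^^ i) v)"
    and independent_powers: "independent (range (\<lambda>i. (A ^^ i) v))"
proof -
  show inj: "inj (\<lambda>i. (A ^^ i) v)"
  proof (rule injI)
    fix i j
    assume "(A ^^ i) v = (A ^^ j) v"
    then have "monom (1::complex) i - monom 1 j = 0"
      by (intro assms) (simp add: poly_op_diff poly_op_monom)
    then show "i = j"
      by (metis coeff_monom diff_eq_diff_eq diff_self one_neq_zero)
  qed
  show "independent (range (\<lambda>i. (A ^^ i) v))"
  proof (rule independent_range_inj[OF inj])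
    fix I a i
    assume "finite I" "(\<Sum>j\<in>I. a j *s (A ^^ j) v) = 0" "i \<in> I"
    then have "(\<Sum>j\<in>I. monom (a j) j) = 0"
      by (intro assms) (simp add: poly_op_sum poly_op_monom)
    then have "coeff (\<Sum>j\<in>I. monom (a j) j) i = 0"
      by simp
    then show "a i = 0"
      using \<open>finite I\<close> \<open>i \<in> I\<close> by (simp add: coeff_sum)
  qed
qed

lemma span_closed_linear:
  assumes "linear_op T" "T ` S \<subseteq> span S" "x \<in> span S"
  shows "T x \<in> span S"
proof -
  have "T ` span S = span (T ` S)"
    using endo.linear_span_image[OF assms(1)] by simp
  also have "\<dots> \<subseteq> span S"
    using span_mono[OF assms(2)] span_span by simp
  finally show ?thesis
    using assms(3) by blast
qed

lemma span_powers_closed: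
  assumes "linear_op A" "x \<in> span (range (\<lambda>i. (A ^^ i) v))"
  shows "A x \<in> span (range (\<lambda>i. (A ^^ i) v))"
proof (rule span_closed_linear[OF assms(1) _ assms(2)])
  have "A ((A ^^ i) v) \<in> range (\<lambda>i. (A ^^ i) v)" for i
    using rangeI[of "\<lambda>i. (A ^^ i) v" "Suc i"] by simp
  then show "A ` range (\<lambda>i. (A ^^ i) v) \<subseteq> span (range (\<lambda>i. (A ^^ i) v))"
    by (auto intro: span_base)
qed

lemma span_powers_closed_intertwining:
  assumes A: "linear_op A" and B: "linear_op B"
    and BA: "\<And>x. B (A x) = A (B x) + s *s B x"
    and Bv: "B v \<in> span (range (\<lambda>i. (A ^^ i) v))"
    and x: "x \<in> span (range (\<lambda>i. (A ^^ i) v))"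
  shows "B x \<in> span (range (\<lambda>i. (A ^^ i) v))"
proof (rule span_closed_linear[OF B _ x])
  have "B ((A ^^ i) v) \<in> span (range (\<lambda>i. (A ^^ i) v))" for i
  proof (induction i)
    case (Suc i)
    then show ?case
      by (simp add: BA span_add span_scale span_powers_closed[OF A])
  qed (simp add: Bv)
  then show "B ` range (\<lambda>i. (A ^^ i) v) \<subseteq> span (range (\<lambda>i. (A ^^ i) v))"
    by blast
qed

section \<open>Endomorphisms of spaces of countable dimension\<close>

lemma countable_independent_in_span:
  assumes B: "independent B" and S: "countable S" and "B \<subseteq> span S"
  shows "countable B"
proof -
  have "B \<subseteq> (\<Union>T\<in>{T. finite T \<and> T \<subseteq> S}. B \<inter> span T)"
  proof
    fix b
    assume "b \<in> B"
    then obtain T r where T: "finite T" "T \<subseteq> S" and b_eq: "b = (\<Sum>a\<in>T. r a *s a)"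
      using \<open>B \<subseteq> span S\<close> unfolding span_explicit by blast
    have "b \<in> span T"
      unfolding b_eq by (intro span_sum span_scale span_base)
    with T \<open>b \<in> B\<close> show "b \<in> (\<Union>T\<in>{T. finite T \<and> T \<subseteq> S}. B \<inter> span T)"
      by blast
  qed
  moreover have "countable (\<Union>T\<in>{T. finite T \<and> T \<subseteq> S}. B \<inter> span T)"
  proof (rule countable_UN[OF countable_Collect_finite_subset[OF S]])
    fix T
    assume "T \<in> {T. finite T \<and> T \<subseteq> S}"
    then have "finite (B \<inter> span T)"
      using independent_span_bound[of T "B \<inter> span T"] independent_mono[OF B] by blast
    then show "countable (B \<inter> span T)"
      by (rule countable_finite)
  qed
  ultimately show ?thesis
    by (rule countable_subset)
qed

lemma poly_op_linear_factor:
  assumes "linear_op A"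
  shows "poly_op scale [:-z, 1:] A x = A x - z *s x"
  by (simp add: poly_op_pCons[OF assms] endo.linear_0[OF assms])

lemma poly_op_eq_0_resolvent_inj:
  assumes A: "linear_op A" and resolvent_inj: "\<And>z. inj (\<lambda>x. A x - z *s x)"
    and "p \<noteq> 0" "poly_op scale p A x = 0"
  shows "x = 0"
  using assms(3,4)
proof (induction "degree p" arbitrary: p rule: less_induct)
  case less
  show ?case
  proof (cases "degree p = 0")
    case True
    with less.prems show ?thesis
      by (auto elim: degree_eq_zeroE)
  next
    case False
    then obtain z where "poly p z = 0"
      using fundamental_theorem_of_algebra[of p] constant_degree[of p] by auto
    then obtain q where q: "p = [:-z, 1:] * q"
      by (metis dvdE poly_eq_0_iff_dvd)
    with less.prems have "q \<noteq> 0"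
      by auto
    then have "degree q < degree p"
      unfolding q by (subst degree_mult_eq) auto
    moreover have "poly_op scale [:-z, 1:] A (poly_op scale q A x) = 0"
      using less.prems(2) unfolding q by (simp only: poly_op_mult[OF A])
    then have "poly_op scale q A x = 0"
      using injD[OF resolvent_inj[of z], of _ 0]
      by (simp add: poly_op_linear_factor[OF A] endo.linear_0[OF A])
    ultimately show ?thesis
      by (rule less.hyps[OF _ \<open>q \<noteq> 0\<close>])
  qed
qed

lemma resolvent_family_independent:
  assumes A: "linear_op A" and resolvent_inj: "\<And>z. inj (\<lambda>x. A x - z *s x)"
    and g: "\<And>z. A (g z) - z *s g z = w" and "w \<noteq> 0"
  shows inj_resolvent_family: "inj g"
    and independent_resolvent_family: "independent (range g)"
proof -
  show inj: "inj g"
  proof (rule injI)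
    fix z1 z2
    assume "g z1 = g z2"
    then have "A (g z2) - z1 *s g z2 = A (g z2) - z2 *s g z2"
      using g[of z1] g[of z2] by simp
    then have "(z2 - z1) *s g z2 = 0"
      by (auto simp: scale_left_diff_distrib)
    moreover have "g z2 \<noteq> 0"
      using g[of z2] \<open>w \<noteq> 0\<close> endo.linear_0[OF A] by auto
    ultimately show "z1 = z2"
      by simp
  qed
  show "independent (range g)"
  proof (rule independent_range_inj[OF inj])
    fix Z a z0
    assume Z: "finite Z" and sum_0: "(\<Sum>z\<in>Z. a z *s g z) = 0" and "z0 \<in> Z"
    txt \<open>Applying \<open>\<Prod>\<^sub>y\<^sub>\<in>\<^sub>Z (A - y)\<close> turns the relation into \<open>q(A) w = 0\<close> with
      \<open>q = \<Sum>\<^sub>z a\<^sub>z L\<^sub>z\<close>; hence \<open>q = 0\<close>, and evaluating \<open>q\<close> at \<open>z0\<close> isolates \<open>a\<^sub>z\<^sub>0\<close>.\<close>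
    define L where "L z = (\<Prod>y\<in>Z - {z}. [:-y, 1:])" for z
    have L_g: "poly_op scale (\<Prod>y\<in>Z. [:-y, 1:]) A (g z) = poly_op scale (L z) A w" if "z \<in> Z" for z
    proof -
      have "(\<Prod>y\<in>Z. [:-y, 1:]) = L z * [:-z, 1:]"
        unfolding L_def using prod.remove[OF Z that, of "\<lambda>y. [:-y, 1:]"] by (metis mult.commute)
      then show ?thesis
        by (simp only: poly_op_mult[OF A] poly_op_linear_factor[OF A] g)
    qed
    have "poly_op scale (\<Sum>z\<in>Z. smult (a z) (L z)) A w
        = poly_op scale (\<Prod>y\<in>Z. [:-y, 1:]) A (\<Sum>z\<in>Z. a z *s g z)"
      using linear_poly_op[OF A]
      by (simp add: poly_op_sum poly_op_smult endo.linear_sum endo.linear_scale L_g)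
    also have "\<dots> = 0"
      using linear_poly_op[OF A] by (simp add: sum_0 endo.linear_0)
    finally have "(\<Sum>z\<in>Z. smult (a z) (L z)) = 0"
      using poly_op_eq_0_resolvent_inj[OF A resolvent_inj] \<open>w \<noteq> 0\<close> by blast
    then have "poly (\<Sum>z\<in>Z. smult (a z) (L z)) z0 = 0"
      by simp
    then have "(\<Sum>z\<in>Z. a z * poly (L z) z0) = 0"
      by (simp add: poly_sum)
    moreover have "poly (L z) z0 = 0" if "z \<in> Z - {z0}" for z
      using that \<open>z0 \<in> Z\<close> Z by (auto simp: L_def poly_prod prod_zero_iff)
    ultimately have "a z0 * poly (L z0) z0 = 0"
      by (simp add: sum.remove[OF Z \<open>z0 \<in> Z\<close>])
    moreover have "poly (L z0) z0 \<noteq> 0"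
      using Z by (auto simp: L_def poly_prod)
    ultimately show "a z0 = 0"
      by simp
  qed
qed

theorem spectrum_nonempty_countable_dim:
  assumes "countable S" "span S = UNIV" "(UNIV :: 'v set) \<noteq> {0}" and A: "linear_op A"
  shows "\<exists>z. \<not> bij (\<lambda>x. A x - z *s x)"
proof (rule ccontr)
  assume "\<nexists>z. \<not> bij (\<lambda>x. A x - z *s x)"
  then have bij: "bij (\<lambda>x. A x - z *s x)" for z
    by blast
  obtain w :: 'v where "w \<noteq> 0"
    using assms(3) by blast
  define g where "g z = inv (\<lambda>x. A x - z *s x) w" for z
  have g: "A (g z) - z *s g z = w" for z
    unfolding g_def using bij_is_surj[OF bij[of z]] by (rule surj_f_inv_f)
  have "independent (range g)" "inj g"
    using resolvent_family_independent[OF A bij_is_inj[OF bij] g \<open>w \<noteq> 0\<close>] by blast+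
  then have "countable (range g)"
    using countable_independent_in_span \<open>countable S\<close> \<open>span S = UNIV\<close> by blast
  then have "countable (UNIV :: complex set)"
    using countable_image_inj_on \<open>inj g\<close> by blast
  then show False
    using uncountable_UNIV_complex by blast
qed

end

section \<open>Schur's lemma\<close>

context complex_vector_space
begin

lemma cyclic_submodule_least:
  assumes "R_submodule scale E F H W" "w \<in> W"
  shows "cyclic_submodule scale E F H w \<subseteq> W"
proof -
  have "x \<in> W" if "x \<in> word_orbit E F H w" for x
    using that assms unfolding R_submodule_def by induction auto
  then show ?thesis
    unfolding cyclic_submodule_def using assms(1) span_minimal
    unfolding R_submodule_def by blast
qed

end

lemma countable_word_orbit: "countable (word_orbit E F H w)"
proof -
  define word :: "nat list \<Rightarrow> 'a"
    where "word ks = foldr (\<lambda>k x. if k = 0 then E x else if k = 1 then F x else H x) ks w" for ks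
  have "x \<in> range word" if "x \<in> word_orbit E F H w" for x
    using that
  proof induction
    case base
    show ?case by (rule image_eqI[of _ _ "[]"]) (simp_all add: word_def)
  next
    case (stepE x)
    then obtain ks where "x = word ks" by blast
    then show ?case by (intro image_eqI[of _ _ "0 # ks"]) (simp_all add: word_def)
  next
    case (stepF x)
    then obtain ks where "x = word ks" by blast
    then show ?case by (intro image_eqI[of _ _ "1 # ks"]) (simp_all add: word_def)
  next
    case (stepH x)
    then obtain ks where "x = word ks" by blast
    then show ?case by (intro image_eqI[of _ _ "2 # ks"]) (simp_all add: word_def)
  qed
  then show ?thesis
    by (meson countable_image countable_subset subsetI countableI_type)
qed

locale linear_triple = complex_vector_space scale
  for scale :: "complex \<Rightarrow> 'v::ab_group_add \<Rightarrow> 'v" (infixr \<open>*s\<close> 75) +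
  fixes E F H :: "'v \<Rightarrow> 'v"
  assumes linear_E: "Vector_Spaces.linear scale scale E"
    and linear_F: "Vector_Spaces.linear scale scale F"
    and linear_H: "Vector_Spaces.linear scale scale H"
begin

context
  fixes T :: "'v \<Rightarrow> 'v"
  assumes linear_T: "linear_op T"
    and T_E: "\<And>x. E (T x) = T (E x)" and T_F: "\<And>x. F (T x) = T (F x)"
    and T_H: "\<And>x. H (T x) = T (H x)"
begin

lemma R_submodule_kernel: "R_submodule scale E F H {x. T x = 0}"
  unfolding R_submodule_def
  using endo.linear_subspace_kernel[OF linear_T] endo.linear_0[OF linear_E]
    endo.linear_0[OF linear_F] endo.linear_0[OF linear_H]
  by (auto simp flip: T_E T_F T_H)

lemma R_submodule_range: "R_submodule scale E F H (range T)"
  unfolding R_submodule_def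
  using endo.linear_subspace_image[OF linear_T subspace_UNIV]
  by (auto simp: T_E T_F T_H)

end

theorem Schur_lemma_countable_dim:
  assumes irreducible: "R_irreducible scale E F H"
    and "countable S" "span S = UNIV"
    and linear_C: "linear_op C"
    and C_E: "\<And>x. E (C x) = C (E x)" and C_F: "\<And>x. F (C x) = C (F x)"
    and C_H: "\<And>x. H (C x) = C (H x)"
  shows "\<exists>z. \<forall>v. C v = z *s v"
proof -
  have nontrivial: "(UNIV :: 'v set) \<noteq> {0}"
    using irreducible unfolding R_irreducible_def by blast
  then obtain z where not_bij: "\<not> bij (\<lambda>x. C x - z *s x)"
    using spectrum_nonempty_countable_dim[OF \<open>countable S\<close> \<open>span S = UNIV\<close> _ linear_C] by blast
  define T where "T x = C x - z *s x" for x
  have linear_T: "linear_op T"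
    unfolding T_def by (rule linearI)
      (simp_all add: endo.linear_add[OF linear_C] endo.linear_scale[OF linear_C] algebra_simps)
  have commute: "E (T x) = T (E x)" "F (T x) = T (F x)" "H (T x) = T (H x)" for x
    unfolding T_def
    by (simp_all add: C_E C_F C_H endo.linear_diff[OF linear_E] endo.linear_diff[OF linear_F]
        endo.linear_diff[OF linear_H] endo.linear_scale[OF linear_E] endo.linear_scale[OF linear_F]
        endo.linear_scale[OF linear_H])
  have "R_submodule scale E F H {x. T x = 0}" "R_submodule scale E F H (range T)"
    using R_submodule_kernel[OF linear_T commute] R_submodule_range[OF linear_T commute] by blast+
  then have kernel: "{x. T x = 0} = {0} \<or> {x. T x = 0} = UNIV"
    and image: "range T = {0} \<or> range T = UNIV"
    using irreducible unfolding R_irreducible_def by blast+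
  show ?thesis
  proof (cases "{x. T x = 0} = UNIV")
    case True
    then show ?thesis
      unfolding T_def by (intro exI[of _ z]) auto
  next
    case False
    with kernel have "{x. T x = 0} = {0}"
      by blast
    then have "inj T"
      unfolding endo.linear_inj_iff_eq_0[OF linear_T] by blast
    obtain v :: 'v where "v \<noteq> 0"
      using nontrivial by blast
    with \<open>{x. T x = 0} = {0}\<close> have "range T \<noteq> {0}"
      by blast
    with image have "surj T"
      by blast
    with \<open>inj T\<close> not_bij show ?thesis
      unfolding T_def by (simp add: bij_def)
  qed
qed

end

section \<open>The Casimir element of \<open>R(f)\<close>\<close>

locale R_representation = linear_triple scale E F H
  for scale :: "complex \<Rightarrow> 'v::ab_group_add \<Rightarrow> 'v" (infixr \<open>*s\<close> 75) and E F H +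
  fixes f :: "complex poly"
  assumes rel_EF: "\<And>v. E (F v) - F (E v) = poly_op scale f H v"
    and rel_HE: "\<And>v. H (E v) - E (H v) = E v"
    and rel_HF: "\<And>v. H (F v) - F (H v) = - F v"
begin

lemma E_H: "E (H x) = H (E x) + (-1) *s E x"
  using rel_HE[of x] by (simp add: algebra_simps)

lemma F_H: "F (H x) = H (F x) + 1 *s F x"
  using rel_HF[of x] by (simp add: algebra_simps)

text \<open>With \<open>u = casimir_poly\<close>, i.e. \<open>u(x) - u(x - 1) = f(x)\<close>, the commutator \<open>[E, F E] = f(H) E\<close>
  cancels against \<open>[E, u(H)] = (u(H - 1) - u(H)) E\<close>, so \<open>casimir = F E + u(H)\<close> is central.\<close>

definition casimir_poly :: "complex poly"
  where "casimir_poly = (SOME u. backward_diff u = f)"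

lemma backward_diff_casimir_poly: "backward_diff casimir_poly = f"
  unfolding casimir_poly_def by (rule someI_ex) (rule backward_diff_surj)

definition casimir :: "'v \<Rightarrow> 'v"
  where "casimir v = F (E v) + poly_op scale casimir_poly H v"

lemma linear_casimir: "linear_op casimir"
  unfolding casimir_def
  by (rule linearI) (simp_all add: endo.linear_add[OF linear_E] endo.linear_add[OF linear_F]
      endo.linear_scale[OF linear_E] endo.linear_scale[OF linear_F]
      endo.linear_add[OF linear_poly_op[OF linear_H]] endo.linear_scale[OF linear_poly_op[OF linear_H]]
      scale_right_distrib)

lemma casimir_H: "H (casimir v) = casimir (H v)"
proof -
  have "H (F (E v)) = F (E (H v))"
    using rel_HF[of "E v"] rel_HE[of v]
    by (simp add: algebra_simps endo.linear_add[OF linear_F] endo.linear_diff[OF linear_F])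
  then show ?thesis
    unfolding casimir_def
    by (simp add: endo.linear_add[OF linear_H] poly_op_commute[OF linear_H linear_H])
qed

lemma poly_op_f: "poly_op scale f H x
    = poly_op scale casimir_poly H x - poly_op scale (pcompose casimir_poly [:-1, 1:]) H x"
proof -
  have "poly_op scale (backward_diff casimir_poly) H x
      = poly_op scale casimir_poly H x - poly_op scale (pcompose casimir_poly [:-1, 1:]) H x"
    by (simp add: backward_diff_def poly_op_diff)
  then show ?thesis
    by (simp add: backward_diff_casimir_poly)
qed

lemma casimir_E: "E (casimir v) = casimir (E v)"
proof -
  have "E (casimir v) = E (F (E v)) + poly_op scale (pcompose casimir_poly [:-1, 1:]) H (E v)"
    unfolding casimir_def
    by (simp add: endo.linear_add[OF linear_E] poly_op_intertwine[OF linear_H linear_E E_H])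
  also have "E (F (E v)) = F (E (E v)) + poly_op scale f H (E v)"
    using rel_EF[of "E v"] by (simp add: algebra_simps)
  finally show ?thesis
    unfolding casimir_def by (simp add: poly_op_f)
qed

lemma casimir_F: "F (casimir v) = casimir (F v)"
proof -
  have "pcompose (backward_diff casimir_poly) [:1, 1:] = pcompose casimir_poly [:1, 1:] - casimir_poly"
    by (simp add: backward_diff_def pcompose_diff pcompose_assoc[symmetric] pcompose_pCons)
  then have shift: "pcompose casimir_poly [:1, 1:] = pcompose f [:1, 1:] + casimir_poly"
    by (simp add: backward_diff_casimir_poly)
  have "F (casimir v) = F (F (E v)) + F (poly_op scale f H v) + poly_op scale casimir_poly H (F v)"
    unfolding casimir_def
    by (simp add: endo.linear_add[OF linear_F] poly_op_intertwine[OF linear_H linear_F F_H]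
        shift poly_op_add add.assoc)
  also have "F (F (E v)) + F (poly_op scale f H v) = F (E (F v))"
    using rel_EF[of v] by (simp flip: endo.linear_add[OF linear_F] add: algebra_simps)
  finally show ?thesis
    unfolding casimir_def .
qed

end

section \<open>Irreducible Whittaker modules\<close>

locale irreducible_whittaker = R_representation scale E F H f
  for scale :: "complex \<Rightarrow> 'v::ab_group_add \<Rightarrow> 'v" (infixr \<open>*s\<close> 75) and E F H f +
  fixes c :: complex and w :: 'v
  assumes c_nonzero: "c \<noteq> 0"
    and irreducible: "R_irreducible scale E F H"
    and whittaker: "E w = c *s w"
    and cyclic: "cyclic_submodule scale E F H w = UNIV"
begin

lemma whittaker_vector_nonzero: "w \<noteq> 0"
proof
  assume "w = 0"
  have "R_submodule scale E F H {0}"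
    unfolding R_submodule_def
    by (simp add: subspace_single_0 endo.linear_0[OF linear_E] endo.linear_0[OF linear_F]
        endo.linear_0[OF linear_H])
  with \<open>w = 0\<close> have "(UNIV :: 'v set) = {0}"
    using cyclic_submodule_least[of E F H "{0}" w] cyclic by blast
  with irreducible show False
    unfolding R_irreducible_def by blast
qed

lemma poly_op_H_whittaker_eq_0_imp:
  assumes "poly_op scale p H w = 0"
  shows "p = 0"
  using assms
proof (induction "degree p" arbitrary: p rule: less_induct)
  case less
  show ?case
  proof (rule ccontr)
    assume "p \<noteq> 0"
    show False
    proof (cases "degree p = 0")
      case True
      then obtain a where "p = [:a:]" "a \<noteq> 0"
        using \<open>p \<noteq> 0\<close> by (metis degree_eq_zeroE pCons_0_0)
      with less.prems whittaker_vector_nonzero show False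
        by simp
    next
      case False
      have "c *s poly_op scale (pcompose p [:-1, 1:]) H w = E (poly_op scale p H w)"
        by (simp add: poly_op_intertwine[OF linear_H linear_E E_H] whittaker
            endo.linear_scale[OF linear_poly_op[OF linear_H]])
      with less.prems c_nonzero have "poly_op scale (pcompose p [:-1, 1:]) H w = 0"
        by (simp add: endo.linear_0[OF linear_E])
      with less.prems have "poly_op scale (backward_diff p) H w = 0"
        by (simp add: backward_diff_def poly_op_diff)
      with False less.hyps have "backward_diff p = 0"
        using degree_backward_diff_less by blast
      with False show False
        by (simp add: backward_diff_eq_0_iff)
    qed
  qed
qed

lemma casimir_scalar: "\<exists>z. \<forall>v. casimir v = z *s v"
  using Schur_lemma_countable_dim[OF irreducible countable_word_orbit _ linear_casimir
      casimir_E casimir_F casimir_H] cyclic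
  unfolding cyclic_submodule_def by blast

lemma R_submodule_span_powers_H: "R_submodule scale E F H (span (range (\<lambda>i. (H ^^ i) w)))"
proof -
  let ?P = "span (range (\<lambda>i. (H ^^ i) w))"
  have w: "w \<in> ?P"
    using span_base[OF rangeI[of "\<lambda>i. (H ^^ i) w" 0]] by simp
  obtain z where z: "casimir w = z *s w"
    using casimir_scalar by blast
  have "E w \<in> ?P"
    using w by (simp add: whittaker span_scale)
  have "c *s F w = z *s w - poly_op scale casimir_poly H w"
    using z by (simp add: casimir_def whittaker endo.linear_scale[OF linear_F] eq_diff_eq)
  also have "\<dots> \<in> ?P"
    using w by (intro span_diff span_scale poly_op_in_span_powers)
  finally have "F w \<in> ?P"
    using c_nonzero span_scale[of "c *s F w" _ "inverse c"] by simp
  show ?thesis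
    unfolding R_submodule_def
    using span_powers_closed_intertwining[OF linear_H linear_E E_H \<open>E w \<in> ?P\<close>]
      span_powers_closed_intertwining[OF linear_H linear_F F_H \<open>F w \<in> ?P\<close>]
      span_powers_closed[OF linear_H]
    by (simp add: subspace_span)
qed

lemma span_powers_H_eq_UNIV: "span (range (\<lambda>i. (H ^^ i) w)) = UNIV"
  using cyclic_submodule_least[OF R_submodule_span_powers_H] cyclic span_base[OF rangeI[of _ 0]]
  by force

end

theorem mainTheorem9:
  fixes scale :: "complex \<Rightarrow> 'v::ab_group_add \<Rightarrow> 'v"
    and f :: "complex poly"
    and E F H :: "'v \<Rightarrow> 'v"
    and c :: complex
    and w :: 'v
  assumes "R_module scale f E F H"
    and "c \<noteq> 0"
    and "R_irreducible scale E F H"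
    and "whittaker_module scale E F H c w"
  shows "inj (\<lambda>i::nat. (H ^^ i) w)
    \<and> module.independent scale (range (\<lambda>i::nat. (H ^^ i) w))
    \<and> module.span scale (range (\<lambda>i::nat. (H ^^ i) w)) = UNIV"
proof -
  interpret irreducible_whittaker scale E F H f c w
    using assms
    unfolding irreducible_whittaker_def irreducible_whittaker_axioms_def R_representation_def
      R_representation_axioms_def linear_triple_def linear_triple_axioms_def
      complex_vector_space_def R_module_def whittaker_module_def whittaker_vector_def
    by blast
  show ?thesis
    using inj_powers[OF poly_op_H_whittaker_eq_0_imp] independent_powers[OF poly_op_H_whittaker_eq_0_imp]
      span_powers_H_eq_UNIV
    by blast
qed

end
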